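(* Let $\overrightarrow{C}$ be an oriented 2-regular graph with at least two cycle components, each of which is either unidirectional or $\Theta$-oriented. Then $\overrightarrow{C}$ is $\{1\}$-antimagic if and only if at most one of its cycle components is $\Theta$-oriented (and all others are unidirectional).
   Context: An oriented graph is a simple graph each of whose edges is given one direction (an arc $(u,v)$ goes from $u$ to $v$). For vertices $u,v$, $d(u,v)$ is the length of a shortest directed path from $u$ to $v$ ($d(u,u)=0$, $\infty$ if no path). For a set $D$ of nonnegative integers, $N_D(v)=\{y : d(v,y)\in D\}$; for a bijection $f:V\to\{1,\dots,|V|\}$, $\omega_D(v)=\sum_{x\in N_D(v)}f(x)$ (empty sum $0$); $f$ is $D$-antimagic if distinct vertices have distinct $D$-weights, and the graph is $D$-antimagic if such an $f$ exists. An oriented 2-regular graph is an orientation of a disjoint union of cycles, each of length at least $3$. A cycle component on $v_1,\dots,v_n$ is unidirectional if (up to relabeling) its arcs are $(v_i,v_{i+1})$, $1\le i\le n-1$, and $(v_n,v_1)$; it is $\Theta$-oriented if it has exactly one source (in-degree $0$) and exactly one sink (out-degree $0$) and these are adjacent, i.e. up to relabeling its arcs are $(v_i,v_{i+1})$, $1\le i\le n-1$, and $(v_1,v_n)$. *)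

theory Defs
  imports Main "HOL-Library.Extended_Nat"
begin

text \<open>An oriented graph: finite vertex set V, arc set A \<subseteq> V \<times> V, no loops,
  and no pair of opposite arcs (each edge of a simple graph gets one direction).\<close>
definition oriented_graph :: "'a set \<Rightarrow> ('a \<times> 'a) set \<Rightarrow> bool" where
  "oriented_graph V A \<longleftrightarrow> finite V \<and> A \<subseteq> V \<times> V \<and> (\<forall>v. (v, v) \<notin> A)
     \<and> (\<forall>u v. (u, v) \<in> A \<longrightarrow> (v, u) \<notin> A)"

definition dist_or :: "('a \<times> 'a) set \<Rightarrow> 'a \<Rightarrow> 'a \<Rightarrow> enat" where
  "dist_or A u v = (if \<exists>n. (u, v) \<in> A ^^ n then enat (LEAST n. (u, v) \<in> A ^^ n) else \<infinity>)"

definition nbhd_D :: "'a set \<Rightarrow> ('a \<times> 'a) set \<Rightarrow> nat set \<Rightarrow> 'a \<Rightarrow> 'a set" where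
  "nbhd_D V A D v = {y \<in> V. \<exists>k \<in> D. dist_or A v y = enat k}"

definition weight_D :: "'a set \<Rightarrow> ('a \<times> 'a) set \<Rightarrow> nat set \<Rightarrow> ('a \<Rightarrow> nat) \<Rightarrow> 'a \<Rightarrow> nat" where
  "weight_D V A D f v = (\<Sum>x \<in> nbhd_D V A D v. f x)"

definition D_antimagic_labeling :: "'a set \<Rightarrow> ('a \<times> 'a) set \<Rightarrow> nat set \<Rightarrow> ('a \<Rightarrow> nat) \<Rightarrow> bool" where
  "D_antimagic_labeling V A D f \<longleftrightarrow> bij_betw f V {1..card V} \<and> inj_on (weight_D V A D f) V"

definition D_antimagic :: "'a set \<Rightarrow> ('a \<times> 'a) set \<Rightarrow> nat set \<Rightarrow> bool" where
  "D_antimagic V A D \<longleftrightarrow> (\<exists>f. D_antimagic_labeling V A D f)"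

definition components :: "'a set \<Rightarrow> ('a \<times> 'a) set \<Rightarrow> 'a set set" where
  "components V A = {((A \<union> A\<inverse>)\<^sup>*) `` {v} | v. v \<in> V}"

definition unidirectional :: "('a \<times> 'a) set \<Rightarrow> 'a set \<Rightarrow> bool" where
  "unidirectional A C \<longleftrightarrow> (\<exists>n vs. n \<ge> 3 \<and> bij_betw vs {1..n} C \<and>
     A \<inter> (C \<times> C) = {(vs i, vs (Suc i)) | i. 1 \<le> i \<and> i < n} \<union> {(vs n, vs 1)})"

definition theta_oriented :: "('a \<times> 'a) set \<Rightarrow> 'a set \<Rightarrow> bool" where
  "theta_oriented A C \<longleftrightarrow> (\<exists>n vs. n \<ge> 3 \<and> bij_betw vs {1..n} C \<and>
     A \<inter> (C \<times> C) = {(vs i, vs (Suc i)) | i. 1 \<le> i \<and> i < n} \<union> {(vs 1, vs n)})"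

end

theory Submission
  imports Defs "HOL-Combinatorics.Transposition"
begin

text \<open>For D = {1} the weight of a vertex is the sum of the labels of its out-neighbours. In a
  unidirectional cycle every vertex has exactly one out-neighbour and distinct vertices have
  distinct ones, so any labelling is antimagic on such components. A Theta-oriented cycle has one
  sink, of weight 0, so two of them force equal weights. With a single Theta-oriented cycle,
  giving the largest label to an out-neighbour of the source makes its weight exceed every other
  weight, while the remaining vertices still have distinct single out-neighbours.\<close>

lemma dist_or_eq_1_iff:
  assumes "(u, u) \<notin> A"
  shows "dist_or A u v = enat 1 \<longleftrightarrow> (u, v) \<in> A"
proof
  assume "dist_or A u v = enat 1"
  then have "\<exists>n. (u, v) \<in> A ^^ n" and "(LEAST n. (u, v) \<in> A ^^ n) = 1"
    by (auto simp: dist_or_def split: if_splits)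
  then show "(u, v) \<in> A"
    by (metis LeastI_ex relpow_1)
next
  assume uv: "(u, v) \<in> A"
  have "(LEAST n. (u, v) \<in> A ^^ n) = 1"
  proof (rule Least_equality)
    show "(u, v) \<in> A ^^ 1" using uv by simp
    show "1 \<le> m" if "(u, v) \<in> A ^^ m" for m
      using that uv assms by (cases m) auto
  qed
  then show "dist_or A u v = enat 1"
    using uv unfolding dist_or_def by (metis relpow_1)
qed

lemma weight_D_one:
  assumes "oriented_graph V A"
  shows "weight_D V A {1} f v = sum f (A `` {v})"
proof -
  have "nbhd_D V A {1} v = A `` {v}"
    using assms dist_or_eq_1_iff[of v A] by (auto simp: nbhd_D_def oriented_graph_def)
  then show ?thesis
    by (simp add: weight_D_def)
qed

definition distinct_successors :: "('a \<times> 'a) set \<Rightarrow> 'a set \<Rightarrow> bool" where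
  "distinct_successors A S \<longleftrightarrow> (\<forall>x \<in> S. \<exists>y. A `` {x} = {y}) \<and> inj_on (\<lambda>x. A `` {x}) S"

lemma distinct_successorsI:
  assumes "\<And>x. x \<in> S \<Longrightarrow> A `` {x} = {s x}" "inj_on s S"
  shows "distinct_successors A S"
proof -
  have "inj_on (\<lambda>x. A `` {x}) S \<longleftrightarrow> inj_on (\<lambda>x. {s x}) S"
    using assms(1) by (rule inj_on_cong)
  then show ?thesis
    using assms by (auto simp: distinct_successors_def inj_on_def)
qed

lemma distinct_successors_subset:
  "distinct_successors A S \<Longrightarrow> T \<subseteq> S \<Longrightarrow> distinct_successors A T"
  by (auto simp: distinct_successors_def intro: inj_on_subset)

lemma weight_D_one_distinct_successors:
  assumes "oriented_graph V A" "bij_betw f V {1..card V}" "distinct_successors A S" "S \<subseteq> V"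
  shows "inj_on (weight_D V A {1} f) S" and "weight_D V A {1} f ` S \<subseteq> {1..card V}"
proof -
  have AV: "A \<subseteq> V \<times> V"
    using assms(1) by (simp add: oriented_graph_def)
  obtain s where s: "\<And>x. x \<in> S \<Longrightarrow> A `` {x} = {s x}"
    using assms(3) unfolding distinct_successors_def by metis
  have sV: "s x \<in> V" if "x \<in> S" for x
    using s[OF that] AV by blast
  have weight: "weight_D V A {1} f x = f (s x)" if "x \<in> S" for x
    unfolding weight_D_one[OF assms(1)] using s[OF that] by simp
  show "weight_D V A {1} f ` S \<subseteq> {1..card V}"
    using weight sV bij_betw_apply[OF assms(2)] by auto
  show "inj_on (weight_D V A {1} f) S"
  proof (rule inj_onI)
    fix x x' assume "x \<in> S" "x' \<in> S" "weight_D V A {1} f x = weight_D V A {1} f x'"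
    then have "s x = s x'"
      using weight sV bij_betw_imp_inj_on[OF assms(2)] by (metis inj_onD)
    then have "A `` {x} = A `` {x'}"
      using s \<open>x \<in> S\<close> \<open>x' \<in> S\<close> by simp
    then show "x = x'"
      using assms(3) \<open>x \<in> S\<close> \<open>x' \<in> S\<close> by (auto simp: distinct_successors_def dest: inj_onD)
  qed
qed

lemma not_D_antimagic_one_if_two_sinks:
  assumes "oriented_graph V A" "z \<in> V" "z' \<in> V" "z \<noteq> z'" "A `` {z} = {}" "A `` {z'} = {}"
  shows "\<not> D_antimagic V A {1}"
proof
  assume "D_antimagic V A {1}"
  then obtain f where "inj_on (weight_D V A {1} f) V"
    by (auto simp: D_antimagic_def D_antimagic_labeling_def)
  moreover have "weight_D V A {1} f z = weight_D V A {1} f z'"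
    using assms(5,6) unfolding weight_D_one[OF assms(1)] by simp
  ultimately show False
    using assms(2-4) by (auto dest: inj_onD)
qed

lemma D_antimagic_one_if_distinct_successors:
  assumes "oriented_graph V A" "distinct_successors A V"
  shows "D_antimagic V A {1}"
proof -
  obtain f where f: "bij_betw f V {1..card V}"
    using finite_same_card_bij[of V "{1..card V}"] assms(1) by (auto simp: oriented_graph_def)
  then show ?thesis
    using weight_D_one_distinct_successors(1)[OF assms(1) f assms(2)]
    by (auto simp: D_antimagic_def D_antimagic_labeling_def)
qed

lemma ex_labeling_with_max:
  assumes "finite V" "b \<in> V"
  obtains f where "bij_betw f V {1..card V}" "f b = card V"
proof -
  obtain g where g: "bij_betw g V {1..card V}"
    using finite_same_card_bij[of V "{1..card V}"] assms(1) by auto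
  have "g b \<in> {1..card V}"
    by (rule bij_betw_apply[OF g assms(2)])
  moreover have "card V \<in> {1..card V}"
    using assms card_gt_0_iff[of V] by auto
  ultimately have "bij_betw (transpose (g b) (card V)) {1..card V} {1..card V}"
    by (intro bij_betw_transpose_iff) blast
  then have "bij_betw (transpose (g b) (card V) \<circ> g) V {1..card V}"
    using g bij_betw_trans by blast
  moreover have "(transpose (g b) (card V) \<circ> g) b = card V"
    by simp
  ultimately show ?thesis
    using that by blast
qed

lemma D_antimagic_one_if_source_sink:
  assumes "oriented_graph V A" "a \<in> V" "z \<in> V" "b \<noteq> z"
    and "A `` {a} = {b, z}" "A `` {z} = {}" "distinct_successors A (V - {a, z})"
  shows "D_antimagic V A {1}"
proof -
  have "b \<in> V"
    using assms(1,5) by (auto simp: oriented_graph_def)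
  then obtain f where f: "bij_betw f V {1..card V}" "f b = card V"
    using ex_labeling_with_max assms(1) by (metis oriented_graph_def)
  let ?w = "weight_D V A {1} f"
  have rest: "inj_on ?w (V - {a, z})" "?w ` (V - {a, z}) \<subseteq> {1..card V}"
    using weight_D_one_distinct_successors[OF assms(1) f(1) assms(7)] by auto
  have "f z \<ge> 1"
    using bij_betw_apply[OF f(1) assms(3)] by simp
  then have wa: "?w a > card V"
    using assms(4,5) f(2) unfolding weight_D_one[OF assms(1)] by simp
  have wz: "?w z = 0"
    using assms(6) unfolding weight_D_one[OF assms(1)] by simp
  have "a \<noteq> z"
    using assms(5,6) by auto
  have "inj_on ?w (insert a (insert z (V - {a, z})))"
    using rest wa wz \<open>a \<noteq> z\<close> by (fastforce simp: inj_on_insert)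
  moreover have "insert a (insert z (V - {a, z})) = V"
    using assms(2,3) by auto
  ultimately have "inj_on ?w V"
    by simp
  then show ?thesis
    using f(1) unfolding D_antimagic_def D_antimagic_labeling_def by blast
qed

lemma out_nbhd_relabel:
  assumes "inj_on vs I" "C = vs ` I" "A \<inter> (C \<times> C) = map_prod vs vs ` R" "R \<subseteq> I \<times> I"
    and "\<And>x y. (x, y) \<in> A \<Longrightarrow> x \<in> C \<longleftrightarrow> y \<in> C" "i \<in> I"
  shows "A `` {vs i} = vs ` (R `` {i})"
proof -
  have "A `` {vs i} = {y. (vs i, y) \<in> A \<inter> (C \<times> C)}"
    using assms(2,6) assms(5)[of "vs i"] by auto
  also have "\<dots> = {y. (vs i, y) \<in> map_prod vs vs ` R}"
    by (simp only: assms(3))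
  also have "\<dots> = vs ` (R `` {i})"
    using assms(4,6) inj_onD[OF assms(1)] by force
  finally show ?thesis .
qed

lemma distinct_successors_relabel:
  assumes "inj_on vs I" "R \<subseteq> I \<times> I" "J \<subseteq> I" "\<And>i. i \<in> I \<Longrightarrow> A `` {vs i} = vs ` (R `` {i})"
    and "distinct_successors R J"
  shows "distinct_successors A (vs ` J)"
  unfolding distinct_successors_def
proof
  show "\<forall>x \<in> vs ` J. \<exists>y. A `` {x} = {y}"
    using assms(3-5) by (fastforce simp: distinct_successors_def)
  have "R `` {i} \<subseteq> I" for i
    using assms(2) by blast
  then have "inj_on (\<lambda>i. vs ` (R `` {i})) J"
    using assms(5) inj_on_image_eq_iff[OF assms(1)] by (auto simp: distinct_successors_def inj_on_def)
  moreover have "inj_on ((\<lambda>x. A `` {x}) \<circ> vs) J \<longleftrightarrow> inj_on (\<lambda>i. vs ` (R `` {i})) J"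
    using assms(3,4) by (intro inj_on_cong) auto
  ultimately show "inj_on (\<lambda>x. A `` {x}) (vs ` J)"
    by (blast intro: inj_on_imageI)
qed

definition path_arcs :: "nat \<Rightarrow> (nat \<times> nat) set" where
  "path_arcs n = {(i, Suc i) | i. 1 \<le> i \<and> i < n}"

lemma image_path_arcs:
  "map_prod vs vs ` path_arcs n = {(vs i, vs (Suc i)) | i. 1 \<le> i \<and> i < n}"
  by (auto simp: path_arcs_def)

lemma distinct_successors_cycle_arcs:
  "distinct_successors (path_arcs n \<union> {(n, 1)}) {1..n}"
proof (rule distinct_successorsI)
  show "(path_arcs n \<union> {(n, 1)}) `` {i} = {if i < n then Suc i else 1}" if "i \<in> {1..n}" for i
    using that by (auto simp: path_arcs_def)
  show "inj_on (\<lambda>i. if i < n then Suc i else 1) {1..n}"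
    by (auto simp: inj_on_def)
qed

lemma distinct_successors_theta_arcs:
  "distinct_successors (path_arcs n \<union> {(1, n)}) {2..<n}"
proof (rule distinct_successorsI)
  show "(path_arcs n \<union> {(1, n)}) `` {i} = {Suc i}" if "i \<in> {2..<n}" for i
    using that by (auto simp: path_arcs_def)
qed simp

lemma distinct_successors_unidirectional:
  assumes "unidirectional A C" "\<And>x y. (x, y) \<in> A \<Longrightarrow> x \<in> C \<longleftrightarrow> y \<in> C"
  shows "distinct_successors A C"
proof -
  obtain n vs where n: "n \<ge> 3" and bij: "bij_betw vs {1..n} C"
    and arcs: "A \<inter> (C \<times> C) = map_prod vs vs ` (path_arcs n \<union> {(n, 1)})"
    using assms(1) by (auto simp: unidirectional_def image_path_arcs)
  have inj: "inj_on vs {1..n}" and C: "C = vs ` {1..n}"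
    using bij by (auto simp: bij_betw_def)
  have R: "path_arcs n \<union> {(n, 1)} \<subseteq> {1..n} \<times> {1..n}"
    using n by (auto simp: path_arcs_def)
  show ?thesis
    using distinct_successors_relabel[OF inj R order.refl
        out_nbhd_relabel[OF inj C arcs R assms(2)] distinct_successors_cycle_arcs] C
    by simp
qed

lemma theta_oriented_source_sink:
  assumes "theta_oriented A C" "\<And>x y. (x, y) \<in> A \<Longrightarrow> x \<in> C \<longleftrightarrow> y \<in> C"
  obtains a b z where "a \<in> C" "z \<in> C" "b \<noteq> z" "A `` {a} = {b, z}" "A `` {z} = {}"
    "distinct_successors A (C - {a, z})"
proof -
  obtain n vs where n: "n \<ge> 3" and bij: "bij_betw vs {1..n} C"
    and arcs: "A \<inter> (C \<times> C) = map_prod vs vs ` (path_arcs n \<union> {(1, n)})"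
    using assms(1) by (auto simp: theta_oriented_def image_path_arcs)
  let ?R = "path_arcs n \<union> {(1, n)}"
  have inj: "inj_on vs {1..n}" and C: "C = vs ` {1..n}"
    using bij by (auto simp: bij_betw_def)
  have R: "?R \<subseteq> {1..n} \<times> {1..n}"
    using n by (auto simp: path_arcs_def)
  note out = out_nbhd_relabel[OF inj C arcs R assms(2)]
  have "A `` {vs 1} = {vs 2, vs n}"
    using out[of 1] n by (auto simp: path_arcs_def numeral_2_eq_2)
  moreover have "A `` {vs n} = {}"
    using out[of n] n by (auto simp: path_arcs_def)
  moreover have "vs 2 \<noteq> vs n"
    using inj_onD[OF inj, of 2 n] n by auto
  moreover have "{1..n} - {1, n} = {2..<n}"
    by auto
  then have "C - {vs 1, vs n} = vs ` {2..<n}"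
    using C inj_on_image_set_diff[OF inj, of "{1..n}" "{1, n}"] n by auto
  moreover have "distinct_successors A (vs ` {2..<n})"
    by (rule distinct_successors_relabel[OF inj R _ out distinct_successors_theta_arcs]) auto
  moreover have "vs 1 \<in> C" "vs n \<in> C"
    using C n by auto
  ultimately show ?thesis
    using that[of "vs 1" "vs n" "vs 2"] by simp
qed

lemma components_arc_closed:
  assumes "C \<in> components V A" "(x, y) \<in> A"
  shows "x \<in> C \<longleftrightarrow> y \<in> C"
proof -
  obtain u where "C = ((A \<union> A\<inverse>)\<^sup>*) `` {u}"
    using assms(1) by (auto simp: components_def)
  moreover have "(x, y) \<in> (A \<union> A\<inverse>)\<^sup>*" "(y, x) \<in> (A \<union> A\<inverse>)\<^sup>*"
    using assms(2) by auto
  ultimately show ?thesis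
    by (meson Image_singleton_iff rtrancl_trans)
qed

lemma components_cover: "v \<in> V \<Longrightarrow> \<exists>C \<in> components V A. v \<in> C"
  by (auto simp: components_def)

lemma components_disjoint:
  assumes "C \<in> components V A" "C' \<in> components V A" "x \<in> C" "x \<in> C'"
  shows "C = C'"
proof -
  let ?R = "(A \<union> A\<inverse>)\<^sup>*"
  have "sym ?R"
    by (simp add: sym_Un_converse sym_rtrancl)
  then have "D = ?R `` {x}" if "D \<in> components V A" "x \<in> D" for D
    using that by (auto simp: components_def dest: symD intro: rtrancl_trans)
  then show ?thesis
    using assms by blast
qed

lemma components_subset:
  assumes "A \<subseteq> V \<times> V" "C \<in> components V A"
  shows "C \<subseteq> V"
proof
  fix y assume "y \<in> C"
  then obtain u where "(u, y) \<in> (A \<union> A\<inverse>)\<^sup>*" "u \<in> V"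
    using assms(2) by (auto simp: components_def)
  then show "y \<in> V"
    using assms(1) by (induction rule: rtrancl_induct) auto
qed

lemma finite_components: "finite V \<Longrightarrow> finite (components V A)"
  by (simp add: components_def setcompr_eq_image)

lemma distinct_successors_components:
  assumes "\<And>C. C \<in> components V A \<Longrightarrow> distinct_successors A (C - E)"
  shows "distinct_successors A (V - E)"
  unfolding distinct_successors_def
proof
  have "\<exists>C \<in> components V A. x \<in> C - E" if "x \<in> V - E" for x
    using that components_cover[of x V A] by blast
  then show "\<forall>x \<in> V - E. \<exists>y. A `` {x} = {y}"
    using assms unfolding distinct_successors_def by blast
  show "inj_on (\<lambda>x. A `` {x}) (V - E)"
  proof (rule inj_onI)
    fix x x' assume x: "x \<in> V - E" and x': "x' \<in> V - E" and eq: "A `` {x} = A `` {x'}"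
    obtain C where C: "C \<in> components V A" "x \<in> C"
      using x components_cover[of x V A] by blast
    have ds: "distinct_successors A (C - E)"
      by (rule assms[OF C(1)])
    then obtain y where "A `` {x} = {y}"
      using C(2) x unfolding distinct_successors_def by blast
    then have "(x, y) \<in> A" "(x', y) \<in> A"
      using eq by auto
    then have "x' \<in> C"
      using C components_arc_closed by metis
    then show "x = x'"
      using ds C(2) x x' eq unfolding distinct_successors_def by (blast dest: inj_onD)
  qed
qed

lemma D_antimagic_one_if_unidirectional:
  assumes "oriented_graph V A" "\<forall>C \<in> components V A. unidirectional A C"
  shows "D_antimagic V A {1}"
proof -
  have "distinct_successors A (C - {})" if "C \<in> components V A" for C
    using distinct_successors_unidirectional[OF _ components_arc_closed[OF that]] that assms(2)
    by simp
  then have "distinct_successors A (V - {})"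
    by (rule distinct_successors_components)
  then show ?thesis
    using D_antimagic_one_if_distinct_successors[OF assms(1)] by (simp only: Diff_empty)
qed

lemma D_antimagic_one_if_one_theta_oriented:
  assumes "oriented_graph V A" "Th \<in> components V A" "theta_oriented A Th"
    and "\<forall>C \<in> components V A - {Th}. unidirectional A C"
  shows "D_antimagic V A {1}"
proof -
  obtain a b z where abz: "a \<in> Th" "z \<in> Th" "b \<noteq> z" "A `` {a} = {b, z}" "A `` {z} = {}"
    and Th: "distinct_successors A (Th - {a, z})"
    by (rule theta_oriented_source_sink[OF assms(3) components_arc_closed[OF assms(2)]])
  have "distinct_successors A (C - {a, z})" if "C \<in> components V A" for C
  proof (cases "C = Th")
    case False
    then have "unidirectional A C"
      using that assms(4) by blast
    then have "distinct_successors A C"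
      by (rule distinct_successors_unidirectional[OF _ components_arc_closed[OF that]])
    then show ?thesis
      by (rule distinct_successors_subset) blast
  qed (use Th in simp)
  then have "distinct_successors A (V - {a, z})"
    by (rule distinct_successors_components)
  moreover have "Th \<subseteq> V"
    using assms(1) components_subset[OF _ assms(2)] by (simp add: oriented_graph_def)
  ultimately show ?thesis
    using abz by (intro D_antimagic_one_if_source_sink[OF assms(1), of a z b]) auto
qed

lemma not_D_antimagic_one_if_two_theta_oriented:
  assumes "oriented_graph V A" "C \<in> components V A" "C' \<in> components V A" "C \<noteq> C'"
    and "theta_oriented A C" "theta_oriented A C'"
  shows "\<not> D_antimagic V A {1}"
proof -
  obtain a b z where z: "z \<in> C" "A `` {z} = {}"
    using theta_oriented_source_sink[OF assms(5) components_arc_closed[OF assms(2)]] by blast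
  obtain a' b' z' where z': "z' \<in> C'" "A `` {z'} = {}"
    using theta_oriented_source_sink[OF assms(6) components_arc_closed[OF assms(3)]] by blast
  have "z \<noteq> z'"
    using components_disjoint[OF assms(2,3)] assms(4) z(1) z'(1) by blast
  moreover have "C \<subseteq> V" "C' \<subseteq> V"
    using assms(1) components_subset[OF _ assms(2)] components_subset[OF _ assms(3)]
    by (simp_all add: oriented_graph_def)
  ultimately show ?thesis
    using not_D_antimagic_one_if_two_sinks[OF assms(1)] z z' by blast
qed

theorem mainTheorem17:
  fixes V :: "'a set" and A :: "('a \<times> 'a) set"
  assumes "oriented_graph V A"
    and "\<forall>C \<in> components V A. unidirectional A C \<or> theta_oriented A C"
    and "card (components V A) \<ge> 2"
  shows "D_antimagic V A {1} \<longleftrightarrow> card {C \<in> components V A. theta_oriented A C} \<le> 1"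
proof -
  let ?T = "{C \<in> components V A. theta_oriented A C}"
  have "finite ?T"
    using assms(1) finite_components[of V A] by (simp add: oriented_graph_def)
  show ?thesis
  proof
    assume "D_antimagic V A {1}"
    then have "\<forall>C \<in> ?T. \<forall>C' \<in> ?T. C = C'"
      using not_D_antimagic_one_if_two_theta_oriented[OF assms(1)] by blast
    then show "card ?T \<le> 1"
      by (simp add: card_le_Suc0_iff_eq[OF \<open>finite ?T\<close>])
  next
    assume "card ?T \<le> 1"
    then consider "?T = {}" | Th where "?T = {Th}"
      by (metis One_nat_def card_1_singletonE card_0_eq \<open>finite ?T\<close> le_Suc_eq le_zero_eq)
    then show "D_antimagic V A {1}"
    proof cases
      case 1
      then show ?thesis
        using D_antimagic_one_if_unidirectional[OF assms(1)] assms(2) by blast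
    next
      case 2
      then show ?thesis
        using D_antimagic_one_if_one_theta_oriented[OF assms(1)] assms(2) by blast
    qed
  qed
qed

end
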